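(* Work in $\mathrm{IKP}$. For any set $x$, if (1) every $\beta \in x$ satisfies $\beta \in \mathrm{PlOrd}$, and (2) for every $\gamma \in \mathrm{PlOrd}$, if $\gamma \subseteq \beta$ for some $\beta \in x$ then $\gamma \in x$, then $x \in \mathrm{PlOrd}$.
   Context: $\mathrm{IKP}$ is intuitionistic Kripke–Platek set theory (with strong infinity). An ordinal is a transitive set of transitive sets. For sets $\alpha,\gamma$, write $\mathrm{relpl}_\alpha(\gamma)$ for the formula $\forall \delta \in \gamma\ \forall \varepsilon \in \alpha\,(\varepsilon \subseteq \delta \rightarrow \varepsilon \in \gamma)$. $\mathrm{PlOrd}$ is the class of ordinals $\alpha$ such that for all $\beta \in \alpha$ and all $\gamma \subseteq \beta$ with $\mathrm{relpl}_\alpha(\gamma)$, we have $\gamma \in \alpha$ and $\forall \delta \in \alpha\,(\beta \in \delta \rightarrow \gamma \in \delta)$. Elements of $\mathrm{PlOrd}$ are called plump ordinals. *)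

theory Defs
  imports Main
begin

section \<open>Deep embedding of first-order set-theoretic formulas (de Bruijn indices)\<close>

datatype fm =
    Mem nat nat        (* Mem i j : variable i is an element of variable j *)
  | Eq nat nat
  | Bot
  | Conj fm fm
  | Disj fm fm
  | Imp fm fm
  | All fm             (* binds de Bruijn index 0 *)
  | Ex fm

definition up :: "(nat \<Rightarrow> nat) \<Rightarrow> nat \<Rightarrow> nat" where
  "up f = (\<lambda>i. case i of 0 \<Rightarrow> 0 | Suc n \<Rightarrow> Suc (f n))"

fun ren :: "(nat \<Rightarrow> nat) \<Rightarrow> fm \<Rightarrow> fm" where
  "ren f (Mem i j) = Mem (f i) (f j)"
| "ren f (Eq i j) = Eq (f i) (f j)"
| "ren f Bot = Bot"
| "ren f (Conj p q) = Conj (ren f p) (ren f q)"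
| "ren f (Disj p q) = Disj (ren f p) (ren f q)"
| "ren f (Imp p q) = Imp (ren f p) (ren f q)"
| "ren f (All p) = All (ren (up f) p)"
| "ren f (Ex p) = Ex (ren (up f) p)"

definition sub :: "nat \<Rightarrow> nat \<Rightarrow> nat" where
  "sub t = (\<lambda>i. case i of 0 \<Rightarrow> t | Suc n \<Rightarrow> n)"

definition Iff :: "fm \<Rightarrow> fm \<Rightarrow> fm" where
  "Iff p q = Conj (Imp p q) (Imp q p)"

inductive delta0 :: "fm \<Rightarrow> bool" where
  "delta0 (Mem i j)"
| "delta0 (Eq i j)"
| "delta0 Bot"
| "delta0 p \<Longrightarrow> delta0 q \<Longrightarrow> delta0 (Conj p q)"
| "delta0 p \<Longrightarrow> delta0 q \<Longrightarrow> delta0 (Disj p q)"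
| "delta0 p \<Longrightarrow> delta0 q \<Longrightarrow> delta0 (Imp p q)"
| "delta0 p \<Longrightarrow> delta0 (All (Imp (Mem 0 (Suc j)) p))"   (* \<forall>x\<in>y. p *)
| "delta0 p \<Longrightarrow> delta0 (Ex (Conj (Mem 0 (Suc j)) p))"   (* \<exists>x\<in>y. p *)

section \<open>Axioms of IKP (with strong infinity)\<close>

text \<open>Schema instances may contain further free variables (parameters); since
  free variables may be generalised (rule AllI), this is equivalent to using
  universal closures.\<close>

definition ax_ext :: fm where
  "ax_ext = All (All (Imp (All (Iff (Mem 0 2) (Mem 0 1))) (Eq 1 0)))"

definition ax_pair :: fm where
  "ax_pair = All (All (Ex (Conj (Mem 2 0) (Mem 1 0))))"

definition ax_union :: fm where
  "ax_union = All (Ex (All (Imp (Mem 0 2) (All (Imp (Mem 0 1) (Mem 0 2))))))"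

text \<open>Ind(w), w = variable 0: \<exists>e\<in>w (\<forall>y\<in>e. False) \<and> \<forall>x\<in>w \<exists>s\<in>w. \<forall>z (z\<in>s \<leftrightarrow> z\<in>x \<or> z = x)\<close>
definition ind_f :: fm where
  "ind_f = Conj (Ex (Conj (Mem 0 1) (All (Imp (Mem 0 1) Bot))))
                (All (Imp (Mem 0 1) (Ex (Conj (Mem 0 2)
                   (All (Iff (Mem 0 1) (Disj (Mem 0 2) (Eq 0 2))))))))"

text \<open>Strong infinity: \<exists>a (Ind(a) \<and> \<forall>b (Ind(b) \<longrightarrow> a \<subseteq> b))\<close>
definition ax_inf :: fm where
  "ax_inf = Ex (Conj ind_f (All (Imp ind_f (All (Imp (Mem 0 2) (Mem 0 1))))))"

text \<open>\<Delta>0-separation: \<forall>a \<exists>b \<forall>x (x\<in>b \<leftrightarrow> x\<in>a \<and> \<psi>(x,a,params)), where in \<psi>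
  x is index 0, a is index 1, parameters from index 2 on.\<close>
definition ax_sep :: "fm \<Rightarrow> fm" where
  "ax_sep \<psi> = All (Ex (All (Iff (Mem 0 1)
      (Conj (Mem 0 2) (ren (\<lambda>i. if i = 0 then 0 else Suc i) \<psi>)))))"

text \<open>\<Delta>0-collection: \<forall>a (\<forall>x\<in>a \<exists>y \<psi>(y,x,a,params) \<longrightarrow> \<exists>b \<forall>x\<in>a \<exists>y\<in>b \<psi>),
  where in \<psi> y is index 0, x index 1, a index 2, parameters from index 3 on.\<close>
definition ax_coll :: "fm \<Rightarrow> fm" where
  "ax_coll \<psi> = All (Imp (All (Imp (Mem 0 1) (Ex \<psi>)))
      (Ex (All (Imp (Mem 0 2) (Ex (Conj (Mem 0 2)
          (ren (\<lambda>i. if i < 2 then i else Suc i) \<psi>)))))))"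

text \<open>Set induction (full schema): (\<forall>a (\<forall>x\<in>a \<psi>(x) \<longrightarrow> \<psi>(a))) \<longrightarrow> \<forall>a \<psi>(a),
  where in \<psi> the distinguished variable is index 0, parameters from index 1 on.\<close>
definition ax_ind :: "fm \<Rightarrow> fm" where
  "ax_ind \<psi> = Imp (All (Imp (All (Imp (Mem 0 1) (ren (\<lambda>i. if i = 0 then 0 else Suc i) \<psi>))) \<psi>))
                  (All \<psi>)"

inductive_set ikp_axioms :: "fm set" where
  "ax_ext \<in> ikp_axioms"
| "ax_pair \<in> ikp_axioms"
| "ax_union \<in> ikp_axioms"
| "ax_inf \<in> ikp_axioms"
| "delta0 \<psi> \<Longrightarrow> ax_sep \<psi> \<in> ikp_axioms"
| "delta0 \<psi> \<Longrightarrow> ax_coll \<psi> \<in> ikp_axioms"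
| "ax_ind \<psi> \<in> ikp_axioms"

inductive IKP_proves :: "fm list \<Rightarrow> fm \<Rightarrow> bool" (infix "\<turnstile>\<^sub>I\<^sub>K\<^sub>P" 50) where
  Ax:    "p \<in> ikp_axioms \<Longrightarrow> G \<turnstile>\<^sub>I\<^sub>K\<^sub>P p"
| Assm:  "p \<in> set G \<Longrightarrow> G \<turnstile>\<^sub>I\<^sub>K\<^sub>P p"
| BotE:  "G \<turnstile>\<^sub>I\<^sub>K\<^sub>P Bot \<Longrightarrow> G \<turnstile>\<^sub>I\<^sub>K\<^sub>P p"
| ConjI: "G \<turnstile>\<^sub>I\<^sub>K\<^sub>P p \<Longrightarrow> G \<turnstile>\<^sub>I\<^sub>K\<^sub>P q \<Longrightarrow> G \<turnstile>\<^sub>I\<^sub>K\<^sub>P Conj p q"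
| ConjE1: "G \<turnstile>\<^sub>I\<^sub>K\<^sub>P Conj p q \<Longrightarrow> G \<turnstile>\<^sub>I\<^sub>K\<^sub>P p"
| ConjE2: "G \<turnstile>\<^sub>I\<^sub>K\<^sub>P Conj p q \<Longrightarrow> G \<turnstile>\<^sub>I\<^sub>K\<^sub>P q"
| DisjI1: "G \<turnstile>\<^sub>I\<^sub>K\<^sub>P p \<Longrightarrow> G \<turnstile>\<^sub>I\<^sub>K\<^sub>P Disj p q"
| DisjI2: "G \<turnstile>\<^sub>I\<^sub>K\<^sub>P q \<Longrightarrow> G \<turnstile>\<^sub>I\<^sub>K\<^sub>P Disj p q"
| DisjE: "G \<turnstile>\<^sub>I\<^sub>K\<^sub>P Disj p q \<Longrightarrow> p # G \<turnstile>\<^sub>I\<^sub>K\<^sub>P r \<Longrightarrow> q # G \<turnstile>\<^sub>I\<^sub>K\<^sub>P r \<Longrightarrow> G \<turnstile>\<^sub>I\<^sub>K\<^sub>P r"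
| ImpI:  "p # G \<turnstile>\<^sub>I\<^sub>K\<^sub>P q \<Longrightarrow> G \<turnstile>\<^sub>I\<^sub>K\<^sub>P Imp p q"
| ImpE:  "G \<turnstile>\<^sub>I\<^sub>K\<^sub>P Imp p q \<Longrightarrow> G \<turnstile>\<^sub>I\<^sub>K\<^sub>P p \<Longrightarrow> G \<turnstile>\<^sub>I\<^sub>K\<^sub>P q"
| AllI:  "map (ren Suc) G \<turnstile>\<^sub>I\<^sub>K\<^sub>P p \<Longrightarrow> G \<turnstile>\<^sub>I\<^sub>K\<^sub>P All p"
| AllE:  "G \<turnstile>\<^sub>I\<^sub>K\<^sub>P All p \<Longrightarrow> G \<turnstile>\<^sub>I\<^sub>K\<^sub>P ren (sub t) p"
| ExI:   "G \<turnstile>\<^sub>I\<^sub>K\<^sub>P ren (sub t) p \<Longrightarrow> G \<turnstile>\<^sub>I\<^sub>K\<^sub>P Ex p"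
| ExE:   "G \<turnstile>\<^sub>I\<^sub>K\<^sub>P Ex p \<Longrightarrow> p # map (ren Suc) G \<turnstile>\<^sub>I\<^sub>K\<^sub>P ren Suc q \<Longrightarrow> G \<turnstile>\<^sub>I\<^sub>K\<^sub>P q"
| EqRefl: "G \<turnstile>\<^sub>I\<^sub>K\<^sub>P Eq i i"
| EqSubst: "G \<turnstile>\<^sub>I\<^sub>K\<^sub>P Eq i j \<Longrightarrow> G \<turnstile>\<^sub>I\<^sub>K\<^sub>P ren (sub i) p \<Longrightarrow> G \<turnstile>\<^sub>I\<^sub>K\<^sub>P ren (sub j) p"

text \<open>a \<subseteq> b with a = index 0, b = index 1\<close>
definition sub_f :: fm where
  "sub_f = All (Imp (Mem 0 1) (Mem 0 2))"

text \<open>transitive(v), v = index 0\<close>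
definition trans_f :: fm where
  "trans_f = All (Imp (Mem 0 1) (All (Imp (Mem 0 1) (Mem 0 2))))"

text \<open>ordinal(v): transitive set of transitive sets, v = index 0\<close>
definition ord_f :: fm where
  "ord_f = Conj trans_f (All (Imp (Mem 0 1) trans_f))"

text \<open>relpl_\<alpha>(\<gamma>), \<alpha> = index 0, \<gamma> = index 1:
  \<forall>\<delta>\<in>\<gamma> \<forall>\<epsilon>\<in>\<alpha> (\<epsilon> \<subseteq> \<delta> \<longrightarrow> \<epsilon> \<in> \<gamma>)\<close>
definition relpl_f :: fm where
  "relpl_f = All (Imp (Mem 0 2) (All (Imp (Mem 0 2) (Imp sub_f (Mem 0 3)))))"

text \<open>PlOrd(\<alpha>), \<alpha> = index 0: ordinal(\<alpha>) \<and> \<forall>\<beta>\<in>\<alpha> \<forall>\<gamma> (\<gamma> \<subseteq> \<beta> \<longrightarrow> relpl_\<alpha>(\<gamma>) \<longrightarrow>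
  \<gamma> \<in> \<alpha> \<and> \<forall>\<delta>\<in>\<alpha> (\<beta> \<in> \<delta> \<longrightarrow> \<gamma> \<in> \<delta>))\<close>
definition plord_f :: fm where
  "plord_f = Conj ord_f
     (All (Imp (Mem 0 1)
        (All (Imp sub_f
           (Imp (ren (\<lambda>i. if i = 0 then 2 else 0) relpl_f)
              (Conj (Mem 0 2)
                 (All (Imp (Mem 0 3) (Imp (Mem 2 0) (Mem 1 0))))))))))"

text \<open>The statement of Proposition 2.6 as a sentence:
  \<forall>x [ (\<forall>\<beta>\<in>x. PlOrd \<beta>) \<longrightarrow> (\<forall>\<gamma> (PlOrd \<gamma> \<longrightarrow> (\<exists>\<beta>\<in>x. \<gamma> \<subseteq> \<beta>) \<longrightarrow> \<gamma> \<in> x)) \<longrightarrow> PlOrd x ]\<close>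
definition prop2p6_f :: fm where
  "prop2p6_f = All (Imp (All (Imp (Mem 0 1) plord_f))
      (Imp (All (Imp plord_f
                   (Imp (Ex (Conj (Mem 0 2) (ren (\<lambda>i. if i = 0 then 1 else 0) sub_f)))
                        (Mem 0 1))))
           plord_f))"

end

theory Submission
  imports Defs
begin

(* If \<alpha> is plump and \<gamma> \<in> \<alpha>, then relpl\<^sub>\<alpha>(\<gamma>). This is proved by set induction
   on \<delta>, showing \<epsilon> \<in> \<gamma> for all \<gamma>, \<epsilon> \<in> \<alpha> with \<delta> \<in> \<gamma> and \<epsilon> \<subseteq> \<delta>: the induction
   hypothesis gives relpl\<^sub>\<alpha>(\<epsilon>), and plumpness of \<alpha> applied to \<epsilon> \<subseteq> \<delta> \<in> \<gamma> gives \<epsilon> \<in> \<gamma>.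
   Consequently elements of plump ordinals are plump.
   For x as in the statement, an element \<delta> of some \<beta> \<in> x is plump and a subset of \<beta>,
   so \<delta> \<in> x by (2); hence x is an ordinal. Given \<gamma> \<subseteq> \<beta> \<in> x with relpl\<^sub>x(\<gamma>), the set \<gamma>
   is a plump ordinal, so \<gamma> \<in> x by (2), and for \<delta> \<in> x with \<beta> \<in> \<delta> the inclusion \<delta> \<subseteq> x
   turns relpl\<^sub>x(\<gamma>) into relpl\<^sub>\<delta>(\<gamma>), so \<gamma> \<in> \<delta> by plumpness of \<delta>. *)

section \<open>Renaming and weakening\<close>

fun occurs :: "nat \<Rightarrow> fm \<Rightarrow> bool" where
  "occurs z (Mem i j) \<longleftrightarrow> z = i \<or> z = j"
| "occurs z (Eq i j) \<longleftrightarrow> z = i \<or> z = j"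
| "occurs z Bot \<longleftrightarrow> False"
| "occurs z (Conj p q) \<longleftrightarrow> occurs z p \<or> occurs z q"
| "occurs z (Disj p q) \<longleftrightarrow> occurs z p \<or> occurs z q"
| "occurs z (Imp p q) \<longleftrightarrow> occurs z p \<or> occurs z q"
| "occurs z (All p) \<longleftrightarrow> occurs (Suc z) p"
| "occurs z (Ex p) \<longleftrightarrow> occurs (Suc z) p"

lemma finite_occurs: "finite {z. occurs z p}"
proof (induction p)
  case (All p)
  show ?case using finite_vimageI[OF All inj_Suc] by (simp add: vimage_def)
next
  case (Ex p)
  show ?case using finite_vimageI[OF Ex inj_Suc] by (simp add: vimage_def)
qed (simp_all add: Collect_disj_eq)

lemma up_0 [simp]: "up f 0 = 0"
  and up_Suc [simp]: "up f (Suc n) = Suc (f n)"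
  and up_1 [simp]: "up f 1 = Suc (f 0)"
  and up_numeral [simp]: "up f (numeral k) = Suc (f (pred_numeral k))"
  by (simp_all add: up_def numeral_eq_Suc)

lemma sub_0 [simp]: "sub t 0 = t"
  and sub_Suc [simp]: "sub t (Suc n) = n"
  and sub_1 [simp]: "sub t 1 = 0"
  and sub_numeral [simp]: "sub t (numeral k) = pred_numeral k"
  by (simp_all add: sub_def numeral_eq_Suc)

lemma ren_cong: "(\<And>i. occurs i p \<Longrightarrow> f i = g i) \<Longrightarrow> ren f p = ren g p"
proof (induction p arbitrary: f g)
  case (Conj p q)
  show ?case using Conj.IH[of f g] Conj.prems by simp
next
  case (Disj p q)
  show ?case using Disj.IH[of f g] Disj.prems by simp
next
  case (Imp p q)
  show ?case using Imp.IH[of f g] Imp.prems by simp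
next
  case (All p)
  have "ren (up f) p = ren (up g) p"
  proof (rule All.IH)
    show "up f i = up g i" if "occurs i p" for i
      using that All.prems by (cases i) simp_all
  qed
  then show ?case by simp
next
  case (Ex p)
  have "ren (up f) p = ren (up g) p"
  proof (rule Ex.IH)
    show "up f i = up g i" if "occurs i p" for i
      using that Ex.prems by (cases i) simp_all
  qed
  then show ?case by simp
qed simp_all

lemma up_comp: "up f \<circ> up g = up (f \<circ> g)"
  by (simp add: fun_eq_iff up_def split: nat.split)

lemma ren_comp: "ren f (ren g p) = ren (f \<circ> g) p"
  by (induction p arbitrary: f g) (simp_all add: up_comp)

lemma ren_id: "ren (\<lambda>i. i) p = p"
proof -
  have "up (\<lambda>i. i) = (\<lambda>i. i)" by (simp add: fun_eq_iff up_def split: nat.split)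
  then show ?thesis by (induction p) simp_all
qed

lemma ren_sub: "ren f (ren (sub t) p) = ren (sub (f t)) (ren (up f) p)"
proof -
  have "f \<circ> sub t = sub (f t) \<circ> up f"
    by (simp add: fun_eq_iff up_def sub_def split: nat.split)
  then show ?thesis by (simp add: ren_comp)
qed

lemma ren_up_Suc: "ren (up f) (ren Suc p) = ren Suc (ren f p)"
proof -
  have "up f \<circ> Suc = Suc \<circ> f" by (simp add: fun_eq_iff)
  then show ?thesis by (simp add: ren_comp)
qed

lemma map_ren_up_Suc: "map (ren (up f)) (map (ren Suc) G) = map (ren Suc) (map (ren f) G)"
  by (simp add: ren_up_Suc)

lemma delta0_ren: "delta0 p \<Longrightarrow> delta0 (ren f p)"
proof (induction arbitrary: f rule: delta0.induct)
  case (7 p j)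
  then show ?case using delta0.intros(7)[of "ren (up f) p" "f j"] by simp
next
  case (8 p j)
  then show ?case using delta0.intros(8)[of "ren (up f) p" "f j"] by simp
qed (simp_all add: delta0.intros)

lemma ikp_axioms_ren: "p \<in> ikp_axioms \<Longrightarrow> ren f p \<in> ikp_axioms"
proof (induction rule: ikp_axioms.induct)
  case (5 \<psi>)
  have "(\<lambda>i. if i = 0 then 0 else Suc i) \<circ> up (up f) =
      up (up (up f)) \<circ> (\<lambda>i. if i = 0 then 0 else Suc i)"
    by (simp add: fun_eq_iff up_def split: nat.split)
  then have "ren f (ax_sep \<psi>) = ax_sep (ren (up (up f)) \<psi>)"
    by (simp add: ax_sep_def Iff_def ren_comp)
  then show ?case using 5 by (simp add: ikp_axioms.intros delta0_ren)
next
  case (6 \<psi>)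
  have "(\<lambda>i. if i < 2 then i else Suc i) \<circ> up (up (up f)) =
      up (up (up (up f))) \<circ> (\<lambda>i. if i < 2 then i else Suc i)"
    by (simp add: fun_eq_iff up_def split: nat.split)
  then have "ren f (ax_coll \<psi>) = ax_coll (ren (up (up (up f))) \<psi>)"
    by (simp add: ax_coll_def ren_comp)
  then show ?case using 6 by (simp add: ikp_axioms.intros delta0_ren)
next
  case (7 \<psi>)
  have "(\<lambda>i. if i = 0 then 0 else Suc i) \<circ> up f = up (up f) \<circ> (\<lambda>i. if i = 0 then 0 else Suc i)"
    by (simp add: fun_eq_iff up_def split: nat.split)
  then have "ren f (ax_ind \<psi>) = ax_ind (ren (up f) \<psi>)"
    by (simp add: ax_ind_def ren_comp)
  then show ?case by (simp add: ikp_axioms.intros)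
next
  case 1
  have "ren f ax_ext = ax_ext" by (simp add: ax_ext_def Iff_def)
  then show ?case by (simp add: ikp_axioms.intros)
next
  case 2
  have "ren f ax_pair = ax_pair" by (simp add: ax_pair_def)
  then show ?case by (simp add: ikp_axioms.intros)
next
  case 3
  have "ren f ax_union = ax_union" by (simp add: ax_union_def)
  then show ?case by (simp add: ikp_axioms.intros)
next
  case 4
  have "ren f ax_inf = ax_inf" by (simp add: ax_inf_def ind_f_def Iff_def)
  then show ?case by (simp add: ikp_axioms.intros)
qed

lemma IKP_proves_ren: "G \<turnstile>\<^sub>I\<^sub>K\<^sub>P p \<Longrightarrow> map (ren f) G \<turnstile>\<^sub>I\<^sub>K\<^sub>P ren f p"
proof (induction arbitrary: f rule: IKP_proves.induct)
  case (Ax p G) show ?case using Ax.hyps by (simp add: IKP_proves.Ax ikp_axioms_ren)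
next
  case (Assm p G) show ?case using Assm.hyps by (simp add: IKP_proves.Assm)
next
  case (BotE G p) show ?case using BotE.IH[of f] by (simp add: IKP_proves.BotE)
next
  case (ConjI G p q) show ?case using ConjI.IH[of f] by (simp add: IKP_proves.ConjI)
next
  case (ConjE1 G p q) show ?case using IKP_proves.ConjE1 ConjE1.IH[of f] by simp
next
  case (ConjE2 G p q) show ?case using IKP_proves.ConjE2 ConjE2.IH[of f] by simp
next
  case (DisjI1 G p q) show ?case using DisjI1.IH[of f] by (simp add: IKP_proves.DisjI1)
next
  case (DisjI2 G q p) show ?case using DisjI2.IH[of f] by (simp add: IKP_proves.DisjI2)
next
  case (DisjE G p q r)
  show ?case using IKP_proves.DisjE DisjE.IH(1)[of f] DisjE.IH(2,3)[of f] by simp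
next
  case (ImpI p G q) show ?case using ImpI.IH[of f] by (simp add: IKP_proves.ImpI)
next
  case (ImpE G p q) show ?case using IKP_proves.ImpE ImpE.IH(1,2)[of f] by simp
next
  case (AllI G p)
  have "map (ren Suc) (map (ren f) G) \<turnstile>\<^sub>I\<^sub>K\<^sub>P ren (up f) p"
    using AllI.IH[of "up f"] by (simp only: map_ren_up_Suc)
  then show ?case by (simp add: IKP_proves.AllI)
next
  case (AllE G p t)
  show ?case using IKP_proves.AllE[OF AllE.IH[of f, simplified]] by (simp add: ren_sub)
next
  case (ExI G t p)
  show ?case using IKP_proves.ExI[OF ExI.IH[of f, unfolded ren_sub]] by simp
next
  case (ExE G p q)
  have "ren (up f) p # map (ren Suc) (map (ren f) G) \<turnstile>\<^sub>I\<^sub>K\<^sub>P ren Suc (ren f q)"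
    using ExE.IH(2)[of "up f"] by (simp only: list.map map_ren_up_Suc ren_up_Suc)
  then show ?case using IKP_proves.ExE[OF ExE.IH(1)[of f, simplified]] by simp
next
  case (EqRefl G i) show ?case by (simp add: IKP_proves.EqRefl)
next
  case (EqSubst G i j p)
  show ?case
    using IKP_proves.EqSubst[OF EqSubst.IH(1)[of f, simplified]
        EqSubst.IH(2)[of f, unfolded ren_sub]]
    by (simp add: ren_sub)
qed

lemma IKP_proves_weaken: "G \<turnstile>\<^sub>I\<^sub>K\<^sub>P p \<Longrightarrow> set G \<subseteq> set H \<Longrightarrow> H \<turnstile>\<^sub>I\<^sub>K\<^sub>P p"
proof (induction arbitrary: H rule: IKP_proves.induct)
  case (Ax p G) show ?case using Ax.hyps by (rule IKP_proves.Ax)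
next
  case (Assm p G) show ?case using Assm by (blast intro: IKP_proves.Assm)
next
  case (BotE G p) show ?case by (rule IKP_proves.BotE[OF BotE.IH[OF BotE.prems]])
next
  case (ConjI G p q) show ?case by (rule IKP_proves.ConjI[OF ConjI.IH[OF ConjI.prems]])
next
  case (ConjE1 G p q) show ?case by (rule IKP_proves.ConjE1[OF ConjE1.IH[OF ConjE1.prems]])
next
  case (ConjE2 G p q) show ?case by (rule IKP_proves.ConjE2[OF ConjE2.IH[OF ConjE2.prems]])
next
  case (DisjI1 G p q) show ?case by (rule IKP_proves.DisjI1[OF DisjI1.IH[OF DisjI1.prems]])
next
  case (DisjI2 G q p) show ?case by (rule IKP_proves.DisjI2[OF DisjI2.IH[OF DisjI2.prems]])
next
  case (DisjE G p q r)
  have "set (p # G) \<subseteq> set (p # H)" "set (q # G) \<subseteq> set (q # H)" using DisjE.prems by auto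
  then show ?case by (rule IKP_proves.DisjE[OF DisjE.IH(1)[OF DisjE.prems] DisjE.IH(2,3)])
next
  case (ImpI p G q)
  have "set (p # G) \<subseteq> set (p # H)" using ImpI.prems by auto
  then show ?case by (rule IKP_proves.ImpI[OF ImpI.IH])
next
  case (ImpE G p q) show ?case by (rule IKP_proves.ImpE[OF ImpE.IH[OF ImpE.prems]])
next
  case (AllI G p)
  have "set (map (ren Suc) G) \<subseteq> set (map (ren Suc) H)" using AllI.prems by auto
  then show ?case by (rule IKP_proves.AllI[OF AllI.IH])
next
  case (AllE G p t) show ?case by (rule IKP_proves.AllE[OF AllE.IH[OF AllE.prems]])
next
  case (ExI G t p) show ?case by (rule IKP_proves.ExI[OF ExI.IH[OF ExI.prems]])
next
  case (ExE G p q)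
  have "set (p # map (ren Suc) G) \<subseteq> set (p # map (ren Suc) H)" using ExE.prems by auto
  then show ?case by (rule IKP_proves.ExE[OF ExE.IH(1)[OF ExE.prems] ExE.IH(2)])
next
  case (EqRefl G i) show ?case by (rule IKP_proves.EqRefl)
next
  case (EqSubst G i j p) show ?case by (rule IKP_proves.EqSubst[OF EqSubst.IH[OF EqSubst.prems]])
qed

section \<open>Derived rules\<close>

lemma AllI_instances:
  assumes "\<And>z. G \<turnstile>\<^sub>I\<^sub>K\<^sub>P ren (sub z) p"
  shows "G \<turnstile>\<^sub>I\<^sub>K\<^sub>P All p"
proof -
  have "finite ({z. occurs z (All p)} \<union> (\<Union>q\<in>set G. {z. occurs z q}))"
    using finite_occurs by (auto simp del: occurs.simps)
  then obtain z where z: "\<not> occurs z (All p)" "\<forall>q\<in>set G. \<not> occurs z q"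
    using ex_new_if_finite[OF infinite_UNIV_nat] by blast
  define f where "f i = (if i = z then 0 else Suc i)" for i
  have "ren (f \<circ> sub z) p = ren (\<lambda>i. i) p"
    by (rule ren_cong) (use z(1) in \<open>auto simp: f_def sub_def split: nat.split\<close>)
  then have "ren f (ren (sub z) p) = p" by (simp add: ren_comp ren_id)
  moreover have "map (ren f) G = map (ren Suc) G"
    using z(2) by (auto simp: f_def intro!: ren_cong)
  ultimately have "map (ren Suc) G \<turnstile>\<^sub>I\<^sub>K\<^sub>P p"
    using IKP_proves_ren[OF assms[of z], of f] by (simp del: map_eq_conv)
  then show ?thesis by (rule IKP_proves.AllI)
qed

(* Premises of introduction rules range over all contexts H proving at least what G proves,
   so hypotheses discharged at nested binders and earlier derivations meet in one context
   and derived rules compose without any bookkeeping of contexts. *)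

lemma AllImpI:
  assumes "\<And>H z. (\<And>q. G \<turnstile>\<^sub>I\<^sub>K\<^sub>P q \<Longrightarrow> H \<turnstile>\<^sub>I\<^sub>K\<^sub>P q) \<Longrightarrow>
    H \<turnstile>\<^sub>I\<^sub>K\<^sub>P ren (sub z) p \<Longrightarrow> H \<turnstile>\<^sub>I\<^sub>K\<^sub>P ren (sub z) r"
  shows "G \<turnstile>\<^sub>I\<^sub>K\<^sub>P All (Imp p r)"
proof (rule AllI_instances)
  fix z
  have "ren (sub z) p # G \<turnstile>\<^sub>I\<^sub>K\<^sub>P ren (sub z) r"
    by (rule assms) (auto elim: IKP_proves_weaken intro: IKP_proves.Assm)
  then show "G \<turnstile>\<^sub>I\<^sub>K\<^sub>P ren (sub z) (Imp p r)" by (simp add: IKP_proves.ImpI)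
qed

lemma AllImpImpI:
  assumes "\<And>H z. (\<And>q. G \<turnstile>\<^sub>I\<^sub>K\<^sub>P q \<Longrightarrow> H \<turnstile>\<^sub>I\<^sub>K\<^sub>P q) \<Longrightarrow>
    H \<turnstile>\<^sub>I\<^sub>K\<^sub>P ren (sub z) p \<Longrightarrow> H \<turnstile>\<^sub>I\<^sub>K\<^sub>P ren (sub z) p' \<Longrightarrow> H \<turnstile>\<^sub>I\<^sub>K\<^sub>P ren (sub z) r"
  shows "G \<turnstile>\<^sub>I\<^sub>K\<^sub>P All (Imp p (Imp p' r))"
proof (rule AllI_instances)
  fix z
  have "ren (sub z) p' # ren (sub z) p # G \<turnstile>\<^sub>I\<^sub>K\<^sub>P ren (sub z) r"
    by (rule assms) (auto elim: IKP_proves_weaken intro: IKP_proves.Assm)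
  then show "G \<turnstile>\<^sub>I\<^sub>K\<^sub>P ren (sub z) (Imp p (Imp p' r))" by (simp add: IKP_proves.ImpI)
qed

lemma AllImpE:
  assumes "G \<turnstile>\<^sub>I\<^sub>K\<^sub>P All (Imp p r)" and "G \<turnstile>\<^sub>I\<^sub>K\<^sub>P ren (sub t) p"
  shows "G \<turnstile>\<^sub>I\<^sub>K\<^sub>P ren (sub t) r"
  using IKP_proves.ImpE IKP_proves.AllE[OF assms(1), of t] assms(2) by simp

lemma AllImpImpE:
  assumes "G \<turnstile>\<^sub>I\<^sub>K\<^sub>P All (Imp p (Imp p' r))"
    and "G \<turnstile>\<^sub>I\<^sub>K\<^sub>P ren (sub t) p" and "G \<turnstile>\<^sub>I\<^sub>K\<^sub>P ren (sub t) p'"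
  shows "G \<turnstile>\<^sub>I\<^sub>K\<^sub>P ren (sub t) r"
proof -
  have "G \<turnstile>\<^sub>I\<^sub>K\<^sub>P Imp (ren (sub t) p') (ren (sub t) r)"
    using AllImpE[OF assms(1,2)] by simp
  then show ?thesis using assms(3) by (rule IKP_proves.ImpE)
qed

lemma set_induction:
  assumes P: "\<And>d. P d = ren (sub d) \<psi>"
    and step: "\<And>H d. (\<And>q. G \<turnstile>\<^sub>I\<^sub>K\<^sub>P q \<Longrightarrow> H \<turnstile>\<^sub>I\<^sub>K\<^sub>P q) \<Longrightarrow>
      (\<And>H' d'. (\<And>q. H \<turnstile>\<^sub>I\<^sub>K\<^sub>P q \<Longrightarrow> H' \<turnstile>\<^sub>I\<^sub>K\<^sub>P q) \<Longrightarrow> H' \<turnstile>\<^sub>I\<^sub>K\<^sub>P Mem d' d \<Longrightarrow> H' \<turnstile>\<^sub>I\<^sub>K\<^sub>P P d') \<Longrightarrow>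
      H \<turnstile>\<^sub>I\<^sub>K\<^sub>P P d"
  shows "G \<turnstile>\<^sub>I\<^sub>K\<^sub>P P t"
proof -
  let ?shift = "\<lambda>i. if i = 0 then 0 else Suc i"
  have shift_inst: "sub d' \<circ> (up (sub d) \<circ> ?shift) = sub d'" for d d'
    by (simp add: fun_eq_iff up_def sub_def split: nat.split)
  have "G \<turnstile>\<^sub>I\<^sub>K\<^sub>P All (Imp (All (Imp (Mem 0 1) (ren ?shift \<psi>))) \<psi>)"
  proof (rule AllI_instances)
    fix d
    let ?IH = "All (Imp (Mem 0 (Suc d)) (ren (up (sub d)) (ren ?shift \<psi>)))"
    have "?IH # G \<turnstile>\<^sub>I\<^sub>K\<^sub>P P d"
    proof (rule step)
      show "?IH # G \<turnstile>\<^sub>I\<^sub>K\<^sub>P q" if "G \<turnstile>\<^sub>I\<^sub>K\<^sub>P q" for q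
        using that by (rule IKP_proves_weaken) auto
      fix H' d' assume ext: "\<And>q. ?IH # G \<turnstile>\<^sub>I\<^sub>K\<^sub>P q \<Longrightarrow> H' \<turnstile>\<^sub>I\<^sub>K\<^sub>P q" and "H' \<turnstile>\<^sub>I\<^sub>K\<^sub>P Mem d' d"
      have "H' \<turnstile>\<^sub>I\<^sub>K\<^sub>P ?IH" by (rule ext) (simp add: IKP_proves.Assm)
      from AllImpE[OF this, where t = d'] \<open>H' \<turnstile>\<^sub>I\<^sub>K\<^sub>P Mem d' d\<close>
      have "H' \<turnstile>\<^sub>I\<^sub>K\<^sub>P ren (sub d') (ren (up (sub d)) (ren ?shift \<psi>))" by simp
      then show "H' \<turnstile>\<^sub>I\<^sub>K\<^sub>P P d'" by (simp only: ren_comp shift_inst P)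
    qed
    then show "G \<turnstile>\<^sub>I\<^sub>K\<^sub>P ren (sub d) (Imp (All (Imp (Mem 0 1) (ren ?shift \<psi>))) \<psi>)"
      by (simp add: IKP_proves.ImpI flip: P)
  qed
  moreover have "G \<turnstile>\<^sub>I\<^sub>K\<^sub>P ax_ind \<psi>" by (intro IKP_proves.Ax ikp_axioms.intros)
  ultimately have "G \<turnstile>\<^sub>I\<^sub>K\<^sub>P All \<psi>" unfolding ax_ind_def by (rule IKP_proves.ImpE[rotated])
  then show ?thesis unfolding P by (rule IKP_proves.AllE)
qed

section \<open>Ordinals and plump ordinals as formulas\<close>

(* The formulas of Defs with their free variables as parameters (see ren_sub_f and
   ren_plord_f); Int_Pow_Subset a d c reads a \<inter> Pow d \<subseteq> c, and Above a b c reads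
   \<forall>\<delta>\<in>a. b \<in> \<delta> \<longrightarrow> c \<in> \<delta>. *)

definition Subset :: "nat \<Rightarrow> nat \<Rightarrow> fm" where
  "Subset a b = All (Imp (Mem 0 (Suc a)) (Mem 0 (Suc b)))"

definition Trans :: "nat \<Rightarrow> fm" where
  "Trans a = All (Imp (Mem 0 (Suc a)) (Subset 0 (Suc a)))"

definition Ordinal :: "nat \<Rightarrow> fm" where
  "Ordinal a = Conj (Trans a) (All (Imp (Mem 0 (Suc a)) (Trans 0)))"

definition Int_Pow_Subset :: "nat \<Rightarrow> nat \<Rightarrow> nat \<Rightarrow> fm" where
  "Int_Pow_Subset a d c = All (Imp (Mem 0 (Suc a)) (Imp (Subset 0 (Suc d)) (Mem 0 (Suc c))))"

definition Relpl :: "nat \<Rightarrow> nat \<Rightarrow> fm" where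
  "Relpl a c = All (Imp (Mem 0 (Suc c)) (Int_Pow_Subset (Suc a) 0 (Suc c)))"

definition Above :: "nat \<Rightarrow> nat \<Rightarrow> nat \<Rightarrow> fm" where
  "Above a b c = All (Imp (Mem 0 (Suc a)) (Imp (Mem (Suc b) 0) (Mem (Suc c) 0)))"

definition Plump :: "nat \<Rightarrow> fm" where
  "Plump a = Conj (Ordinal a) (All (Imp (Mem 0 (Suc a)) (All (Imp (Subset 0 1)
     (Imp (Relpl (Suc (Suc a)) 0) (Conj (Mem 0 (Suc (Suc a))) (Above (Suc (Suc a)) 1 0)))))))"

lemma ren_Subset [simp]: "ren f (Subset a b) = Subset (f a) (f b)"
  and ren_Int_Pow_Subset [simp]: "ren f (Int_Pow_Subset a d c) = Int_Pow_Subset (f a) (f d) (f c)"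
  and ren_Trans [simp]: "ren f (Trans a) = Trans (f a)"
  and ren_Relpl [simp]: "ren f (Relpl a c) = Relpl (f a) (f c)"
  and ren_Above [simp]: "ren f (Above a b c) = Above (f a) (f b) (f c)"
  and ren_Plump [simp]: "ren f (Plump a) = Plump (f a)"
  by (simp_all add: Subset_def Int_Pow_Subset_def Trans_def Ordinal_def Relpl_def Above_def
      Plump_def)

lemma ren_sub_f: "ren f sub_f = Subset (f 0) (f 1)"
  and ren_plord_f: "ren f plord_f = Plump (f 0)"
  by (simp_all add: sub_f_def plord_f_def ord_f_def trans_f_def relpl_f_def
      Subset_def Int_Pow_Subset_def Trans_def Ordinal_def Relpl_def Above_def Plump_def)

lemma SubsetI:
  assumes "\<And>H z. (\<And>q. G \<turnstile>\<^sub>I\<^sub>K\<^sub>P q \<Longrightarrow> H \<turnstile>\<^sub>I\<^sub>K\<^sub>P q) \<Longrightarrow> H \<turnstile>\<^sub>I\<^sub>K\<^sub>P Mem z a \<Longrightarrow> H \<turnstile>\<^sub>I\<^sub>K\<^sub>P Mem z b"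
  shows "G \<turnstile>\<^sub>I\<^sub>K\<^sub>P Subset a b"
  unfolding Subset_def by (rule AllImpI) (simp add: assms)

lemma SubsetD: "G \<turnstile>\<^sub>I\<^sub>K\<^sub>P Subset a b \<Longrightarrow> G \<turnstile>\<^sub>I\<^sub>K\<^sub>P Mem z a \<Longrightarrow> G \<turnstile>\<^sub>I\<^sub>K\<^sub>P Mem z b"
  using AllImpE[of G "Mem 0 (Suc a)" "Mem 0 (Suc b)" z] by (simp add: Subset_def)

lemma TransI:
  assumes "\<And>H y. (\<And>q. G \<turnstile>\<^sub>I\<^sub>K\<^sub>P q \<Longrightarrow> H \<turnstile>\<^sub>I\<^sub>K\<^sub>P q) \<Longrightarrow> H \<turnstile>\<^sub>I\<^sub>K\<^sub>P Mem y a \<Longrightarrow> H \<turnstile>\<^sub>I\<^sub>K\<^sub>P Subset y a"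
  shows "G \<turnstile>\<^sub>I\<^sub>K\<^sub>P Trans a"
  unfolding Trans_def by (rule AllImpI) (simp add: assms)

lemma Trans_Subset: "G \<turnstile>\<^sub>I\<^sub>K\<^sub>P Trans a \<Longrightarrow> G \<turnstile>\<^sub>I\<^sub>K\<^sub>P Mem y a \<Longrightarrow> G \<turnstile>\<^sub>I\<^sub>K\<^sub>P Subset y a"
  using AllImpE[of G "Mem 0 (Suc a)" "Subset 0 (Suc a)" y] by (simp add: Trans_def)

lemma TransD:
  "G \<turnstile>\<^sub>I\<^sub>K\<^sub>P Trans a \<Longrightarrow> G \<turnstile>\<^sub>I\<^sub>K\<^sub>P Mem y a \<Longrightarrow> G \<turnstile>\<^sub>I\<^sub>K\<^sub>P Mem z y \<Longrightarrow> G \<turnstile>\<^sub>I\<^sub>K\<^sub>P Mem z a"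
  by (rule SubsetD[OF Trans_Subset])

lemma OrdinalI:
  assumes "G \<turnstile>\<^sub>I\<^sub>K\<^sub>P Trans a"
    and "\<And>H y. (\<And>q. G \<turnstile>\<^sub>I\<^sub>K\<^sub>P q \<Longrightarrow> H \<turnstile>\<^sub>I\<^sub>K\<^sub>P q) \<Longrightarrow> H \<turnstile>\<^sub>I\<^sub>K\<^sub>P Mem y a \<Longrightarrow> H \<turnstile>\<^sub>I\<^sub>K\<^sub>P Trans y"
  shows "G \<turnstile>\<^sub>I\<^sub>K\<^sub>P Ordinal a"
  unfolding Ordinal_def by (intro IKP_proves.ConjI assms(1) AllImpI) (simp add: assms(2))

lemma Ordinal_Trans: "G \<turnstile>\<^sub>I\<^sub>K\<^sub>P Ordinal a \<Longrightarrow> G \<turnstile>\<^sub>I\<^sub>K\<^sub>P Trans a"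
  unfolding Ordinal_def by (rule IKP_proves.ConjE1)

lemma Ordinal_mem_Trans: "G \<turnstile>\<^sub>I\<^sub>K\<^sub>P Ordinal a \<Longrightarrow> G \<turnstile>\<^sub>I\<^sub>K\<^sub>P Mem y a \<Longrightarrow> G \<turnstile>\<^sub>I\<^sub>K\<^sub>P Trans y"
  using AllImpE[of G "Mem 0 (Suc a)" "Trans 0" y] by (simp add: Ordinal_def IKP_proves.ConjE2)

lemma Int_Pow_SubsetI:
  assumes "\<And>H e. (\<And>q. G \<turnstile>\<^sub>I\<^sub>K\<^sub>P q \<Longrightarrow> H \<turnstile>\<^sub>I\<^sub>K\<^sub>P q) \<Longrightarrow>
    H \<turnstile>\<^sub>I\<^sub>K\<^sub>P Mem e a \<Longrightarrow> H \<turnstile>\<^sub>I\<^sub>K\<^sub>P Subset e d \<Longrightarrow> H \<turnstile>\<^sub>I\<^sub>K\<^sub>P Mem e c"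
  shows "G \<turnstile>\<^sub>I\<^sub>K\<^sub>P Int_Pow_Subset a d c"
  unfolding Int_Pow_Subset_def by (rule AllImpImpI) (simp add: assms)

lemma Int_Pow_SubsetD:
  assumes "G \<turnstile>\<^sub>I\<^sub>K\<^sub>P Int_Pow_Subset a d c" and "G \<turnstile>\<^sub>I\<^sub>K\<^sub>P Mem e a" and "G \<turnstile>\<^sub>I\<^sub>K\<^sub>P Subset e d"
  shows "G \<turnstile>\<^sub>I\<^sub>K\<^sub>P Mem e c"
  using AllImpImpE[OF assms(1)[unfolded Int_Pow_Subset_def], where t = e] assms(2,3) by simp

lemma RelplI:
  assumes "\<And>H d e. (\<And>q. G \<turnstile>\<^sub>I\<^sub>K\<^sub>P q \<Longrightarrow> H \<turnstile>\<^sub>I\<^sub>K\<^sub>P q) \<Longrightarrow>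
    H \<turnstile>\<^sub>I\<^sub>K\<^sub>P Mem d c \<Longrightarrow> H \<turnstile>\<^sub>I\<^sub>K\<^sub>P Mem e a \<Longrightarrow> H \<turnstile>\<^sub>I\<^sub>K\<^sub>P Subset e d \<Longrightarrow> H \<turnstile>\<^sub>I\<^sub>K\<^sub>P Mem e c"
  shows "G \<turnstile>\<^sub>I\<^sub>K\<^sub>P Relpl a c"
  unfolding Relpl_def by (rule AllImpI, simp, rule Int_Pow_SubsetI, rule assms) auto

lemma RelplD:
  assumes "G \<turnstile>\<^sub>I\<^sub>K\<^sub>P Relpl a c" and "G \<turnstile>\<^sub>I\<^sub>K\<^sub>P Mem d c" and "G \<turnstile>\<^sub>I\<^sub>K\<^sub>P Mem e a" and "G \<turnstile>\<^sub>I\<^sub>K\<^sub>P Subset e d"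
  shows "G \<turnstile>\<^sub>I\<^sub>K\<^sub>P Mem e c"
  using Int_Pow_SubsetD AllImpE[OF assms(1)[unfolded Relpl_def], where t = d] assms(2-4) by simp

lemma AboveI:
  assumes "\<And>H d. (\<And>q. G \<turnstile>\<^sub>I\<^sub>K\<^sub>P q \<Longrightarrow> H \<turnstile>\<^sub>I\<^sub>K\<^sub>P q) \<Longrightarrow>
    H \<turnstile>\<^sub>I\<^sub>K\<^sub>P Mem d a \<Longrightarrow> H \<turnstile>\<^sub>I\<^sub>K\<^sub>P Mem b d \<Longrightarrow> H \<turnstile>\<^sub>I\<^sub>K\<^sub>P Mem c d"
  shows "G \<turnstile>\<^sub>I\<^sub>K\<^sub>P Above a b c"
  unfolding Above_def by (rule AllImpImpI) (simp add: assms)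

lemma AboveD:
  assumes "G \<turnstile>\<^sub>I\<^sub>K\<^sub>P Above a b c" and "G \<turnstile>\<^sub>I\<^sub>K\<^sub>P Mem d a" and "G \<turnstile>\<^sub>I\<^sub>K\<^sub>P Mem b d"
  shows "G \<turnstile>\<^sub>I\<^sub>K\<^sub>P Mem c d"
  using AllImpImpE[OF assms(1)[unfolded Above_def], where t = d] assms(2,3) by simp

lemma PlumpI:
  assumes "G \<turnstile>\<^sub>I\<^sub>K\<^sub>P Ordinal a"
    and "\<And>H b c. (\<And>q. G \<turnstile>\<^sub>I\<^sub>K\<^sub>P q \<Longrightarrow> H \<turnstile>\<^sub>I\<^sub>K\<^sub>P q) \<Longrightarrow>
      H \<turnstile>\<^sub>I\<^sub>K\<^sub>P Mem b a \<Longrightarrow> H \<turnstile>\<^sub>I\<^sub>K\<^sub>P Subset c b \<Longrightarrow> H \<turnstile>\<^sub>I\<^sub>K\<^sub>P Relpl a c \<Longrightarrow> H \<turnstile>\<^sub>I\<^sub>K\<^sub>P Mem c a"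
    and "\<And>H b c d. (\<And>q. G \<turnstile>\<^sub>I\<^sub>K\<^sub>P q \<Longrightarrow> H \<turnstile>\<^sub>I\<^sub>K\<^sub>P q) \<Longrightarrow>
      H \<turnstile>\<^sub>I\<^sub>K\<^sub>P Mem b a \<Longrightarrow> H \<turnstile>\<^sub>I\<^sub>K\<^sub>P Subset c b \<Longrightarrow> H \<turnstile>\<^sub>I\<^sub>K\<^sub>P Relpl a c \<Longrightarrow> H \<turnstile>\<^sub>I\<^sub>K\<^sub>P Mem c a \<Longrightarrow>
      H \<turnstile>\<^sub>I\<^sub>K\<^sub>P Mem d a \<Longrightarrow> H \<turnstile>\<^sub>I\<^sub>K\<^sub>P Mem b d \<Longrightarrow> H \<turnstile>\<^sub>I\<^sub>K\<^sub>P Mem c d"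
  shows "G \<turnstile>\<^sub>I\<^sub>K\<^sub>P Plump a"
  unfolding Plump_def
proof (rule IKP_proves.ConjI[OF assms(1)], rule AllImpI, simp, rule AllImpImpI, simp)
  fix H b H' c
  assume GH: "\<And>q. G \<turnstile>\<^sub>I\<^sub>K\<^sub>P q \<Longrightarrow> H \<turnstile>\<^sub>I\<^sub>K\<^sub>P q" and ba: "H \<turnstile>\<^sub>I\<^sub>K\<^sub>P Mem b a"
    and HH': "\<And>q. H \<turnstile>\<^sub>I\<^sub>K\<^sub>P q \<Longrightarrow> H' \<turnstile>\<^sub>I\<^sub>K\<^sub>P q"
    and cb: "H' \<turnstile>\<^sub>I\<^sub>K\<^sub>P Subset c b" and rel: "H' \<turnstile>\<^sub>I\<^sub>K\<^sub>P Relpl a c"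
  have GH': "\<And>q. G \<turnstile>\<^sub>I\<^sub>K\<^sub>P q \<Longrightarrow> H' \<turnstile>\<^sub>I\<^sub>K\<^sub>P q" by (rule HH'[OF GH])
  have ca: "H' \<turnstile>\<^sub>I\<^sub>K\<^sub>P Mem c a" by (rule assms(2)[OF GH' HH'[OF ba] cb rel])
  moreover have "H' \<turnstile>\<^sub>I\<^sub>K\<^sub>P Above a b c"
  proof (rule AboveI)
    fix H'' d assume H'H'': "\<And>q. H' \<turnstile>\<^sub>I\<^sub>K\<^sub>P q \<Longrightarrow> H'' \<turnstile>\<^sub>I\<^sub>K\<^sub>P q"
    show "H'' \<turnstile>\<^sub>I\<^sub>K\<^sub>P Mem d a \<Longrightarrow> H'' \<turnstile>\<^sub>I\<^sub>K\<^sub>P Mem b d \<Longrightarrow> H'' \<turnstile>\<^sub>I\<^sub>K\<^sub>P Mem c d"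
      by (rule assms(3)[OF H'H''[OF GH'] H'H''[OF HH'[OF ba]] H'H''[OF cb] H'H''[OF rel]
            H'H''[OF ca]])
  qed
  ultimately show "H' \<turnstile>\<^sub>I\<^sub>K\<^sub>P Conj (Mem c a) (Above a b c)" by (rule IKP_proves.ConjI)
qed

lemma Plump_Ordinal: "G \<turnstile>\<^sub>I\<^sub>K\<^sub>P Plump a \<Longrightarrow> G \<turnstile>\<^sub>I\<^sub>K\<^sub>P Ordinal a"
  unfolding Plump_def by (rule IKP_proves.ConjE1)

lemma PlumpD:
  assumes "G \<turnstile>\<^sub>I\<^sub>K\<^sub>P Plump a" and "G \<turnstile>\<^sub>I\<^sub>K\<^sub>P Mem b a" and "G \<turnstile>\<^sub>I\<^sub>K\<^sub>P Subset c b" and "G \<turnstile>\<^sub>I\<^sub>K\<^sub>P Relpl a c"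
  shows "G \<turnstile>\<^sub>I\<^sub>K\<^sub>P Mem c a"
    and PlumpD_above: "G \<turnstile>\<^sub>I\<^sub>K\<^sub>P Mem d a \<Longrightarrow> G \<turnstile>\<^sub>I\<^sub>K\<^sub>P Mem b d \<Longrightarrow> G \<turnstile>\<^sub>I\<^sub>K\<^sub>P Mem c d"
proof -
  from AllImpE[OF IKP_proves.ConjE2[OF assms(1)[unfolded Plump_def]], where t = b] assms(2)
  have "G \<turnstile>\<^sub>I\<^sub>K\<^sub>P All (Imp (Subset 0 (Suc b))
      (Imp (Relpl (Suc a) 0) (Conj (Mem 0 (Suc a)) (Above (Suc a) (Suc b) 0))))"
    by simp
  from AllImpImpE[OF this, where t = c] assms(3,4)
  have conj: "G \<turnstile>\<^sub>I\<^sub>K\<^sub>P Conj (Mem c a) (Above a b c)" by simp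
  then show "G \<turnstile>\<^sub>I\<^sub>K\<^sub>P Mem c a" by (rule IKP_proves.ConjE1)
  show "G \<turnstile>\<^sub>I\<^sub>K\<^sub>P Mem c d" if "G \<turnstile>\<^sub>I\<^sub>K\<^sub>P Mem d a" and "G \<turnstile>\<^sub>I\<^sub>K\<^sub>P Mem b d"
    using AboveD[OF IKP_proves.ConjE2[OF conj] that] .
qed

section \<open>Plump ordinals\<close>

lemma Ordinal_mem_Ordinal:
  assumes oa: "G \<turnstile>\<^sub>I\<^sub>K\<^sub>P Ordinal a" and ba: "G \<turnstile>\<^sub>I\<^sub>K\<^sub>P Mem b a"
  shows "G \<turnstile>\<^sub>I\<^sub>K\<^sub>P Ordinal b"
proof (rule OrdinalI)
  show "G \<turnstile>\<^sub>I\<^sub>K\<^sub>P Trans b" using oa ba by (rule Ordinal_mem_Trans)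
  fix H y assume GH: "\<And>q. G \<turnstile>\<^sub>I\<^sub>K\<^sub>P q \<Longrightarrow> H \<turnstile>\<^sub>I\<^sub>K\<^sub>P q" and yb: "H \<turnstile>\<^sub>I\<^sub>K\<^sub>P Mem y b"
  have "H \<turnstile>\<^sub>I\<^sub>K\<^sub>P Mem y a" by (rule TransD[OF Ordinal_Trans[OF GH[OF oa]] GH[OF ba] yb])
  then show "H \<turnstile>\<^sub>I\<^sub>K\<^sub>P Trans y" by (rule Ordinal_mem_Trans[OF GH[OF oa]])
qed

definition Relpl_at :: "nat \<Rightarrow> nat \<Rightarrow> fm" where
  "Relpl_at a d =
     All (Imp (Mem 0 (Suc a)) (Imp (Mem (Suc d) 0) (Int_Pow_Subset (Suc a) (Suc d) 0)))"

lemma ren_Relpl_at [simp]: "ren f (Relpl_at a d) = Relpl_at (f a) (f d)"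
  by (simp add: Relpl_at_def)

lemma Relpl_atI:
  assumes "\<And>H c e. (\<And>q. G \<turnstile>\<^sub>I\<^sub>K\<^sub>P q \<Longrightarrow> H \<turnstile>\<^sub>I\<^sub>K\<^sub>P q) \<Longrightarrow> H \<turnstile>\<^sub>I\<^sub>K\<^sub>P Mem c a \<Longrightarrow> H \<turnstile>\<^sub>I\<^sub>K\<^sub>P Mem d c \<Longrightarrow>
    H \<turnstile>\<^sub>I\<^sub>K\<^sub>P Mem e a \<Longrightarrow> H \<turnstile>\<^sub>I\<^sub>K\<^sub>P Subset e d \<Longrightarrow> H \<turnstile>\<^sub>I\<^sub>K\<^sub>P Mem e c"
  shows "G \<turnstile>\<^sub>I\<^sub>K\<^sub>P Relpl_at a d"
  unfolding Relpl_at_def by (rule AllImpImpI, simp, rule Int_Pow_SubsetI, rule assms) auto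

lemma Relpl_atD:
  assumes "G \<turnstile>\<^sub>I\<^sub>K\<^sub>P Relpl_at a d" and "G \<turnstile>\<^sub>I\<^sub>K\<^sub>P Mem c a" and "G \<turnstile>\<^sub>I\<^sub>K\<^sub>P Mem d c"
    and "G \<turnstile>\<^sub>I\<^sub>K\<^sub>P Mem e a" and "G \<turnstile>\<^sub>I\<^sub>K\<^sub>P Subset e d"
  shows "G \<turnstile>\<^sub>I\<^sub>K\<^sub>P Mem e c"
  using Int_Pow_SubsetD AllImpImpE[OF assms(1)[unfolded Relpl_at_def], where t = c] assms(2-5)
  by simp

lemma Plump_mem_Relpl:
  assumes pa: "G \<turnstile>\<^sub>I\<^sub>K\<^sub>P Plump a" and ca: "G \<turnstile>\<^sub>I\<^sub>K\<^sub>P Mem c a"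
  shows "G \<turnstile>\<^sub>I\<^sub>K\<^sub>P Relpl a c"
proof -
  have ind: "G \<turnstile>\<^sub>I\<^sub>K\<^sub>P Relpl_at a d" for d
  proof (rule set_induction[where P = "Relpl_at a" and \<psi> = "Relpl_at (Suc a) 0"])
    show "Relpl_at a d = ren (sub d) (Relpl_at (Suc a) 0)" for d by simp
  next
    fix H d
    assume GH: "\<And>q. G \<turnstile>\<^sub>I\<^sub>K\<^sub>P q \<Longrightarrow> H \<turnstile>\<^sub>I\<^sub>K\<^sub>P q"
      and IH: "\<And>H' d'. (\<And>q. H \<turnstile>\<^sub>I\<^sub>K\<^sub>P q \<Longrightarrow> H' \<turnstile>\<^sub>I\<^sub>K\<^sub>P q) \<Longrightarrow> H' \<turnstile>\<^sub>I\<^sub>K\<^sub>P Mem d' d \<Longrightarrow> H' \<turnstile>\<^sub>I\<^sub>K\<^sub>P Relpl_at a d'"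
    show "H \<turnstile>\<^sub>I\<^sub>K\<^sub>P Relpl_at a d"
    proof (rule Relpl_atI)
      fix H' c e assume HH': "\<And>q. H \<turnstile>\<^sub>I\<^sub>K\<^sub>P q \<Longrightarrow> H' \<turnstile>\<^sub>I\<^sub>K\<^sub>P q"
        and ca: "H' \<turnstile>\<^sub>I\<^sub>K\<^sub>P Mem c a" and dc: "H' \<turnstile>\<^sub>I\<^sub>K\<^sub>P Mem d c"
        and ea: "H' \<turnstile>\<^sub>I\<^sub>K\<^sub>P Mem e a" and ed: "H' \<turnstile>\<^sub>I\<^sub>K\<^sub>P Subset e d"
      have pa': "H' \<turnstile>\<^sub>I\<^sub>K\<^sub>P Plump a" by (rule HH'[OF GH[OF pa]])
      have da: "H' \<turnstile>\<^sub>I\<^sub>K\<^sub>P Mem d a" by (rule TransD[OF Ordinal_Trans[OF Plump_Ordinal[OF pa']] ca dc])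
      have "H' \<turnstile>\<^sub>I\<^sub>K\<^sub>P Relpl a e"
      proof (rule RelplI)
        fix H'' d' e' assume H'H'': "\<And>q. H' \<turnstile>\<^sub>I\<^sub>K\<^sub>P q \<Longrightarrow> H'' \<turnstile>\<^sub>I\<^sub>K\<^sub>P q"
          and d'e: "H'' \<turnstile>\<^sub>I\<^sub>K\<^sub>P Mem d' e" and e'a: "H'' \<turnstile>\<^sub>I\<^sub>K\<^sub>P Mem e' a"
          and e'd': "H'' \<turnstile>\<^sub>I\<^sub>K\<^sub>P Subset e' d'"
        have "H'' \<turnstile>\<^sub>I\<^sub>K\<^sub>P Relpl_at a d'"
          by (rule IH[OF H'H''[OF HH'] SubsetD[OF H'H''[OF ed] d'e]])
        then show "H'' \<turnstile>\<^sub>I\<^sub>K\<^sub>P Mem e' e" by (rule Relpl_atD[OF _ H'H''[OF ea] d'e e'a e'd'])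
      qed
      then show "H' \<turnstile>\<^sub>I\<^sub>K\<^sub>P Mem e c" by (rule PlumpD_above[OF pa' da ed _ ca dc])
    qed
  qed
  show ?thesis
  proof (rule RelplI)
    fix H d e assume GH: "\<And>q. G \<turnstile>\<^sub>I\<^sub>K\<^sub>P q \<Longrightarrow> H \<turnstile>\<^sub>I\<^sub>K\<^sub>P q"
    assume "H \<turnstile>\<^sub>I\<^sub>K\<^sub>P Mem d c" "H \<turnstile>\<^sub>I\<^sub>K\<^sub>P Mem e a" "H \<turnstile>\<^sub>I\<^sub>K\<^sub>P Subset e d"
    then show "H \<turnstile>\<^sub>I\<^sub>K\<^sub>P Mem e c" by (rule Relpl_atD[OF GH[OF ind] GH[OF ca]])
  qed
qed

lemma Relpl_antimono:
  assumes rel: "G \<turnstile>\<^sub>I\<^sub>K\<^sub>P Relpl x c" and dx: "G \<turnstile>\<^sub>I\<^sub>K\<^sub>P Subset d x"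
  shows "G \<turnstile>\<^sub>I\<^sub>K\<^sub>P Relpl d c"
proof (rule RelplI)
  fix H d' e assume GH: "\<And>q. G \<turnstile>\<^sub>I\<^sub>K\<^sub>P q \<Longrightarrow> H \<turnstile>\<^sub>I\<^sub>K\<^sub>P q"
    and d'c: "H \<turnstile>\<^sub>I\<^sub>K\<^sub>P Mem d' c" and ed: "H \<turnstile>\<^sub>I\<^sub>K\<^sub>P Mem e d" and ed': "H \<turnstile>\<^sub>I\<^sub>K\<^sub>P Subset e d'"
  show "H \<turnstile>\<^sub>I\<^sub>K\<^sub>P Mem e c" by (rule RelplD[OF GH[OF rel] d'c SubsetD[OF GH[OF dx] ed] ed'])
qed

lemma Plump_mem_Plump:
  assumes pa: "G \<turnstile>\<^sub>I\<^sub>K\<^sub>P Plump a" and ba: "G \<turnstile>\<^sub>I\<^sub>K\<^sub>P Mem b a"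
  shows "G \<turnstile>\<^sub>I\<^sub>K\<^sub>P Plump b"
proof -
  have ta: "G \<turnstile>\<^sub>I\<^sub>K\<^sub>P Trans a" by (rule Ordinal_Trans[OF Plump_Ordinal[OF pa]])
  have tb: "G \<turnstile>\<^sub>I\<^sub>K\<^sub>P Trans b" by (rule Ordinal_mem_Trans[OF Plump_Ordinal[OF pa] ba])
  have ab: "G \<turnstile>\<^sub>I\<^sub>K\<^sub>P Relpl a b" by (rule Plump_mem_Relpl[OF pa ba])
  show ?thesis
  proof (rule PlumpI)
    show "G \<turnstile>\<^sub>I\<^sub>K\<^sub>P Ordinal b" by (rule Ordinal_mem_Ordinal[OF Plump_Ordinal[OF pa] ba])
  next
    fix H b' c assume GH: "\<And>q. G \<turnstile>\<^sub>I\<^sub>K\<^sub>P q \<Longrightarrow> H \<turnstile>\<^sub>I\<^sub>K\<^sub>P q"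
      and b'b: "H \<turnstile>\<^sub>I\<^sub>K\<^sub>P Mem b' b" and cb': "H \<turnstile>\<^sub>I\<^sub>K\<^sub>P Subset c b'" and rel: "H \<turnstile>\<^sub>I\<^sub>K\<^sub>P Relpl b c"
    have "H \<turnstile>\<^sub>I\<^sub>K\<^sub>P Relpl a c"
    proof (rule RelplI)
      fix H' d e assume HH': "\<And>q. H \<turnstile>\<^sub>I\<^sub>K\<^sub>P q \<Longrightarrow> H' \<turnstile>\<^sub>I\<^sub>K\<^sub>P q"
        and dc: "H' \<turnstile>\<^sub>I\<^sub>K\<^sub>P Mem d c" and ea: "H' \<turnstile>\<^sub>I\<^sub>K\<^sub>P Mem e a" and ed: "H' \<turnstile>\<^sub>I\<^sub>K\<^sub>P Subset e d"
      have GH': "\<And>q. G \<turnstile>\<^sub>I\<^sub>K\<^sub>P q \<Longrightarrow> H' \<turnstile>\<^sub>I\<^sub>K\<^sub>P q" by (rule HH'[OF GH])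
      have db: "H' \<turnstile>\<^sub>I\<^sub>K\<^sub>P Mem d b"
        by (rule TransD[OF GH'[OF tb] HH'[OF b'b] SubsetD[OF HH'[OF cb'] dc]])
      have "H' \<turnstile>\<^sub>I\<^sub>K\<^sub>P Mem e b" by (rule RelplD[OF GH'[OF ab] db ea ed])
      then show "H' \<turnstile>\<^sub>I\<^sub>K\<^sub>P Mem e c" by (rule RelplD[OF HH'[OF rel] dc _ ed])
    qed
    then show "H \<turnstile>\<^sub>I\<^sub>K\<^sub>P Mem c b"
      by (rule PlumpD_above[OF GH[OF pa] TransD[OF GH[OF ta] GH[OF ba] b'b] cb' _ GH[OF ba] b'b])
  next
    fix H b' c d assume GH: "\<And>q. G \<turnstile>\<^sub>I\<^sub>K\<^sub>P q \<Longrightarrow> H \<turnstile>\<^sub>I\<^sub>K\<^sub>P q"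
      and cb': "H \<turnstile>\<^sub>I\<^sub>K\<^sub>P Subset c b'" and cb: "H \<turnstile>\<^sub>I\<^sub>K\<^sub>P Mem c b"
      and db: "H \<turnstile>\<^sub>I\<^sub>K\<^sub>P Mem d b" and b'd: "H \<turnstile>\<^sub>I\<^sub>K\<^sub>P Mem b' d"
    have "H \<turnstile>\<^sub>I\<^sub>K\<^sub>P Relpl a d"
      by (rule Plump_mem_Relpl[OF GH[OF pa] TransD[OF GH[OF ta] GH[OF ba] db]])
    then show "H \<turnstile>\<^sub>I\<^sub>K\<^sub>P Mem c d" by (rule RelplD[OF _ b'd TransD[OF GH[OF ta] GH[OF ba] cb] cb'])
  qed
qed

lemma Subset_mem_Trans:
  assumes tx: "G \<turnstile>\<^sub>I\<^sub>K\<^sub>P Trans x" and bx: "G \<turnstile>\<^sub>I\<^sub>K\<^sub>P Mem b x" and cb: "G \<turnstile>\<^sub>I\<^sub>K\<^sub>P Subset c b"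
  shows "G \<turnstile>\<^sub>I\<^sub>K\<^sub>P Subset c x"
proof (rule SubsetI)
  fix H d assume GH: "\<And>q. G \<turnstile>\<^sub>I\<^sub>K\<^sub>P q \<Longrightarrow> H \<turnstile>\<^sub>I\<^sub>K\<^sub>P q" and dc: "H \<turnstile>\<^sub>I\<^sub>K\<^sub>P Mem d c"
  show "H \<turnstile>\<^sub>I\<^sub>K\<^sub>P Mem d x" by (rule TransD[OF GH[OF tx] GH[OF bx] SubsetD[OF GH[OF cb] dc]])
qed

lemma Relpl_Subset_Ordinal:
  assumes ox: "G \<turnstile>\<^sub>I\<^sub>K\<^sub>P Ordinal x" and bx: "G \<turnstile>\<^sub>I\<^sub>K\<^sub>P Mem b x"
    and cb: "G \<turnstile>\<^sub>I\<^sub>K\<^sub>P Subset c b" and rel: "G \<turnstile>\<^sub>I\<^sub>K\<^sub>P Relpl x c"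
  shows "G \<turnstile>\<^sub>I\<^sub>K\<^sub>P Ordinal c"
proof -
  have cx: "G \<turnstile>\<^sub>I\<^sub>K\<^sub>P Subset c x" by (rule Subset_mem_Trans[OF Ordinal_Trans[OF ox] bx cb])
  have "G \<turnstile>\<^sub>I\<^sub>K\<^sub>P Trans c"
  proof (rule TransI)
    fix H d assume GH: "\<And>q. G \<turnstile>\<^sub>I\<^sub>K\<^sub>P q \<Longrightarrow> H \<turnstile>\<^sub>I\<^sub>K\<^sub>P q" and dc: "H \<turnstile>\<^sub>I\<^sub>K\<^sub>P Mem d c"
    have dx: "H \<turnstile>\<^sub>I\<^sub>K\<^sub>P Mem d x" by (rule SubsetD[OF GH[OF cx] dc])
    show "H \<turnstile>\<^sub>I\<^sub>K\<^sub>P Subset d c"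
    proof (rule SubsetI)
      fix H' e assume HH': "\<And>q. H \<turnstile>\<^sub>I\<^sub>K\<^sub>P q \<Longrightarrow> H' \<turnstile>\<^sub>I\<^sub>K\<^sub>P q" and ed: "H' \<turnstile>\<^sub>I\<^sub>K\<^sub>P Mem e d"
      have GH': "\<And>q. G \<turnstile>\<^sub>I\<^sub>K\<^sub>P q \<Longrightarrow> H' \<turnstile>\<^sub>I\<^sub>K\<^sub>P q" by (rule HH'[OF GH])
      have ex: "H' \<turnstile>\<^sub>I\<^sub>K\<^sub>P Mem e x" by (rule TransD[OF Ordinal_Trans[OF GH'[OF ox]] HH'[OF dx] ed])
      have "H' \<turnstile>\<^sub>I\<^sub>K\<^sub>P Subset e d"
        by (rule Trans_Subset[OF Ordinal_mem_Trans[OF GH'[OF ox] HH'[OF dx]] ed])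
      then show "H' \<turnstile>\<^sub>I\<^sub>K\<^sub>P Mem e c" by (rule RelplD[OF GH'[OF rel] HH'[OF dc] ex])
    qed
  qed
  then show ?thesis
  proof (rule OrdinalI)
    fix H y assume GH: "\<And>q. G \<turnstile>\<^sub>I\<^sub>K\<^sub>P q \<Longrightarrow> H \<turnstile>\<^sub>I\<^sub>K\<^sub>P q" and yc: "H \<turnstile>\<^sub>I\<^sub>K\<^sub>P Mem y c"
    show "H \<turnstile>\<^sub>I\<^sub>K\<^sub>P Trans y" by (rule Ordinal_mem_Trans[OF GH[OF ox] SubsetD[OF GH[OF cx] yc]])
  qed
qed

lemma Relpl_Subset_Plump:
  assumes ox: "G \<turnstile>\<^sub>I\<^sub>K\<^sub>P Ordinal x" and bx: "G \<turnstile>\<^sub>I\<^sub>K\<^sub>P Mem b x" and pb: "G \<turnstile>\<^sub>I\<^sub>K\<^sub>P Plump b"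
    and cb: "G \<turnstile>\<^sub>I\<^sub>K\<^sub>P Subset c b" and rel: "G \<turnstile>\<^sub>I\<^sub>K\<^sub>P Relpl x c"
  shows "G \<turnstile>\<^sub>I\<^sub>K\<^sub>P Plump c"
proof (rule PlumpI)
  show "G \<turnstile>\<^sub>I\<^sub>K\<^sub>P Ordinal c" by (rule Relpl_Subset_Ordinal[OF ox bx cb rel])
next
  fix H b' c' assume GH: "\<And>q. G \<turnstile>\<^sub>I\<^sub>K\<^sub>P q \<Longrightarrow> H \<turnstile>\<^sub>I\<^sub>K\<^sub>P q"
    and b'c: "H \<turnstile>\<^sub>I\<^sub>K\<^sub>P Mem b' c" and c'b': "H \<turnstile>\<^sub>I\<^sub>K\<^sub>P Subset c' b'" and relc: "H \<turnstile>\<^sub>I\<^sub>K\<^sub>P Relpl c c'"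
  have tx: "G \<turnstile>\<^sub>I\<^sub>K\<^sub>P Trans x" by (rule Ordinal_Trans[OF ox])
  have "H \<turnstile>\<^sub>I\<^sub>K\<^sub>P Relpl b c'"
  proof (rule RelplI)
    fix H' d' e' assume HH': "\<And>q. H \<turnstile>\<^sub>I\<^sub>K\<^sub>P q \<Longrightarrow> H' \<turnstile>\<^sub>I\<^sub>K\<^sub>P q"
      and d'c': "H' \<turnstile>\<^sub>I\<^sub>K\<^sub>P Mem d' c'" and e'b: "H' \<turnstile>\<^sub>I\<^sub>K\<^sub>P Mem e' b" and e'd': "H' \<turnstile>\<^sub>I\<^sub>K\<^sub>P Subset e' d'"
    have GH': "\<And>q. G \<turnstile>\<^sub>I\<^sub>K\<^sub>P q \<Longrightarrow> H' \<turnstile>\<^sub>I\<^sub>K\<^sub>P q" by (rule HH'[OF GH])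
    have tc: "H' \<turnstile>\<^sub>I\<^sub>K\<^sub>P Trans c"
      by (rule Ordinal_Trans[OF GH'[OF Relpl_Subset_Ordinal[OF ox bx cb rel]]])
    have d'c: "H' \<turnstile>\<^sub>I\<^sub>K\<^sub>P Mem d' c" by (rule TransD[OF tc HH'[OF b'c] SubsetD[OF HH'[OF c'b'] d'c']])
    have "H' \<turnstile>\<^sub>I\<^sub>K\<^sub>P Mem e' c"
      by (rule RelplD[OF GH'[OF rel] d'c TransD[OF GH'[OF tx] GH'[OF bx] e'b] e'd'])
    then show "H' \<turnstile>\<^sub>I\<^sub>K\<^sub>P Mem e' c'" by (rule RelplD[OF HH'[OF relc] d'c' _ e'd'])
  qed
  then have "H \<turnstile>\<^sub>I\<^sub>K\<^sub>P Mem c' b" by (rule PlumpD[OF GH[OF pb] SubsetD[OF GH[OF cb] b'c] c'b'])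
  then show "H \<turnstile>\<^sub>I\<^sub>K\<^sub>P Mem c' c"
    by (rule RelplD[OF GH[OF rel] b'c TransD[OF GH[OF tx] GH[OF bx]] c'b'])
next
  fix H b' c' d assume GH: "\<And>q. G \<turnstile>\<^sub>I\<^sub>K\<^sub>P q \<Longrightarrow> H \<turnstile>\<^sub>I\<^sub>K\<^sub>P q"
    and c'b': "H \<turnstile>\<^sub>I\<^sub>K\<^sub>P Subset c' b'" and c'c: "H \<turnstile>\<^sub>I\<^sub>K\<^sub>P Mem c' c"
    and dc: "H \<turnstile>\<^sub>I\<^sub>K\<^sub>P Mem d c" and b'd: "H \<turnstile>\<^sub>I\<^sub>K\<^sub>P Mem b' d"
  have "H \<turnstile>\<^sub>I\<^sub>K\<^sub>P Relpl b d" by (rule Plump_mem_Relpl[OF GH[OF pb] SubsetD[OF GH[OF cb] dc]])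
  then show "H \<turnstile>\<^sub>I\<^sub>K\<^sub>P Mem c' d" by (rule RelplD[OF _ b'd SubsetD[OF GH[OF cb] c'c] c'b'])
qed

definition All_Plump :: "nat \<Rightarrow> fm" where
  "All_Plump x = All (Imp (Mem 0 (Suc x)) (Plump 0))"

definition Plump_closed :: "nat \<Rightarrow> fm" where
  "Plump_closed x =
     All (Imp (Plump 0) (Imp (Ex (Conj (Mem 0 (Suc (Suc x))) (Subset 1 0))) (Mem 0 (Suc x))))"

lemma All_PlumpD: "G \<turnstile>\<^sub>I\<^sub>K\<^sub>P All_Plump x \<Longrightarrow> G \<turnstile>\<^sub>I\<^sub>K\<^sub>P Mem b x \<Longrightarrow> G \<turnstile>\<^sub>I\<^sub>K\<^sub>P Plump b"
  using AllImpE[of G "Mem 0 (Suc x)" "Plump 0" b] by (simp add: All_Plump_def)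

lemma Plump_closedD:
  assumes "G \<turnstile>\<^sub>I\<^sub>K\<^sub>P Plump_closed x" and "G \<turnstile>\<^sub>I\<^sub>K\<^sub>P Plump c" and "G \<turnstile>\<^sub>I\<^sub>K\<^sub>P Mem b x" and "G \<turnstile>\<^sub>I\<^sub>K\<^sub>P Subset c b"
  shows "G \<turnstile>\<^sub>I\<^sub>K\<^sub>P Mem c x"
proof -
  have "G \<turnstile>\<^sub>I\<^sub>K\<^sub>P ren (sub b) (Conj (Mem 0 (Suc x)) (Subset (Suc c) 0))"
    using assms(3,4) by (simp add: IKP_proves.ConjI)
  then have "G \<turnstile>\<^sub>I\<^sub>K\<^sub>P Ex (Conj (Mem 0 (Suc x)) (Subset (Suc c) 0))" by (rule IKP_proves.ExI)
  with AllImpImpE[OF assms(1)[unfolded Plump_closed_def], where t = c] assms(2) show ?thesis by simp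
qed

lemma Plump_closed_Ordinal:
  assumes ap: "G \<turnstile>\<^sub>I\<^sub>K\<^sub>P All_Plump x" and cl: "G \<turnstile>\<^sub>I\<^sub>K\<^sub>P Plump_closed x"
  shows "G \<turnstile>\<^sub>I\<^sub>K\<^sub>P Ordinal x"
proof (rule OrdinalI)
  show "G \<turnstile>\<^sub>I\<^sub>K\<^sub>P Trans x"
  proof (rule TransI)
    fix H b assume GH: "\<And>q. G \<turnstile>\<^sub>I\<^sub>K\<^sub>P q \<Longrightarrow> H \<turnstile>\<^sub>I\<^sub>K\<^sub>P q" and bx: "H \<turnstile>\<^sub>I\<^sub>K\<^sub>P Mem b x"
    have pb: "H \<turnstile>\<^sub>I\<^sub>K\<^sub>P Plump b" by (rule All_PlumpD[OF GH[OF ap] bx])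
    show "H \<turnstile>\<^sub>I\<^sub>K\<^sub>P Subset b x"
    proof (rule SubsetI)
      fix H' d assume HH': "\<And>q. H \<turnstile>\<^sub>I\<^sub>K\<^sub>P q \<Longrightarrow> H' \<turnstile>\<^sub>I\<^sub>K\<^sub>P q" and db: "H' \<turnstile>\<^sub>I\<^sub>K\<^sub>P Mem d b"
      have "H' \<turnstile>\<^sub>I\<^sub>K\<^sub>P Subset d b"
        by (rule Trans_Subset[OF Ordinal_Trans[OF Plump_Ordinal[OF HH'[OF pb]]] db])
      then show "H' \<turnstile>\<^sub>I\<^sub>K\<^sub>P Mem d x"
        by (rule Plump_closedD[OF HH'[OF GH[OF cl]] Plump_mem_Plump[OF HH'[OF pb] db] HH'[OF bx]])
    qed
  qed
  fix H y assume GH: "\<And>q. G \<turnstile>\<^sub>I\<^sub>K\<^sub>P q \<Longrightarrow> H \<turnstile>\<^sub>I\<^sub>K\<^sub>P q" and yx: "H \<turnstile>\<^sub>I\<^sub>K\<^sub>P Mem y x"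
  show "H \<turnstile>\<^sub>I\<^sub>K\<^sub>P Trans y" by (rule Ordinal_Trans[OF Plump_Ordinal[OF All_PlumpD[OF GH[OF ap] yx]]])
qed

lemma Plump_closed_Plump:
  assumes ap: "G \<turnstile>\<^sub>I\<^sub>K\<^sub>P All_Plump x" and cl: "G \<turnstile>\<^sub>I\<^sub>K\<^sub>P Plump_closed x"
  shows "G \<turnstile>\<^sub>I\<^sub>K\<^sub>P Plump x"
proof -
  have ox: "G \<turnstile>\<^sub>I\<^sub>K\<^sub>P Ordinal x" using ap cl by (rule Plump_closed_Ordinal)
  show ?thesis
  proof (rule PlumpI[OF ox])
    fix H b c assume GH: "\<And>q. G \<turnstile>\<^sub>I\<^sub>K\<^sub>P q \<Longrightarrow> H \<turnstile>\<^sub>I\<^sub>K\<^sub>P q"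
      and bx: "H \<turnstile>\<^sub>I\<^sub>K\<^sub>P Mem b x" and cb: "H \<turnstile>\<^sub>I\<^sub>K\<^sub>P Subset c b" and rel: "H \<turnstile>\<^sub>I\<^sub>K\<^sub>P Relpl x c"
    have "H \<turnstile>\<^sub>I\<^sub>K\<^sub>P Plump c"
      by (rule Relpl_Subset_Plump[OF GH[OF ox] bx All_PlumpD[OF GH[OF ap] bx] cb rel])
    then show "H \<turnstile>\<^sub>I\<^sub>K\<^sub>P Mem c x" by (rule Plump_closedD[OF GH[OF cl] _ bx cb])
  next
    fix H b c d assume GH: "\<And>q. G \<turnstile>\<^sub>I\<^sub>K\<^sub>P q \<Longrightarrow> H \<turnstile>\<^sub>I\<^sub>K\<^sub>P q"
      and cb: "H \<turnstile>\<^sub>I\<^sub>K\<^sub>P Subset c b" and rel: "H \<turnstile>\<^sub>I\<^sub>K\<^sub>P Relpl x c"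
      and dx: "H \<turnstile>\<^sub>I\<^sub>K\<^sub>P Mem d x" and bd: "H \<turnstile>\<^sub>I\<^sub>K\<^sub>P Mem b d"
    have "H \<turnstile>\<^sub>I\<^sub>K\<^sub>P Relpl d c"
      by (rule Relpl_antimono[OF rel Trans_Subset[OF Ordinal_Trans[OF GH[OF ox]] dx]])
    then show "H \<turnstile>\<^sub>I\<^sub>K\<^sub>P Mem c d" by (rule PlumpD[OF All_PlumpD[OF GH[OF ap] dx] bd cb])
  qed
qed

theorem proposition2p6:
  shows "[] \<turnstile>\<^sub>I\<^sub>K\<^sub>P prop2p6_f"
proof -
  have "[Plump_closed x, All_Plump x] \<turnstile>\<^sub>I\<^sub>K\<^sub>P Plump x" for x
    by (rule Plump_closed_Plump) (simp_all add: IKP_proves.Assm)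
  then have "[] \<turnstile>\<^sub>I\<^sub>K\<^sub>P Imp (All_Plump x) (Imp (Plump_closed x) (Plump x))" for x
    by (intro IKP_proves.ImpI)
  then show ?thesis
    unfolding prop2p6_f_def
    by (intro AllI_instances) (simp add: ren_plord_f ren_sub_f All_Plump_def Plump_closed_def)
qed

end
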